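(* A finite order $P$ has property (itov) if and only if all of the following hold: (1) $P$ has a relatively maximum full trunk $R$; (2) the induced suborder on $\mathrm{Dom}(P)\setminus R$ has property (itov); (3) every element of $\mathrm{Dom}(P)\setminus R$ is regular to $R$; (4) there is no induced suborder of $P$ isomorphic to $O_{obs1}$ or $O_{obs2}$ whose domain meets both $R$ and $\mathrm{Dom}(P)\setminus R$ and has at least two elements in $\mathrm{Dom}(P)\setminus R$.
   Context: Orders are partial orders; $x\sim y$ means $x\ne y$ and $x,y$ incomparable. $O_{obs1}$ is the order on $\{a,b,c,d\}$ whose only comparabilities are $a<b$, $c<d$; $O_{obs2}$ is the order on $\{a,b,c,d\}$ whose only comparabilities are $a<b$, $c<d$, $c<b$. Property (itov): no induced suborder isomorphic to $O_{obs1}$ or $O_{obs2}$. A trunk of $P$ is a subset $T$ such that for pairwise distinct $x,y,z\in T$, $x\sim y$ and $y\sim z$ imply $x\sim z$; $y,z\in T$ lie in the same $T$-level iff $y=z$ or $y\sim z$. A chain is maximum if it has maximum cardinality among chains of $P$; a full trunk is a trunk containing a maximum chain; a relatively maximum full trunk is a full trunk that is the unique inclusion-maximal full trunk. An element $x$ is regular to a trunk $T$ if for all $y,z\in T$ in the same $T$-level: $x<y\iff x<z$, $x>y\iff x>z$, and ($x\sim y$ or $x=y$) $\iff$ ($x\sim z$ or $x=z$). *)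

theory Defs
  imports Main
begin

text \<open>A finite order P is represented by a carrier set D (its domain) and a
  relation le (the non-strict order), which is a partial order on D.
  Induced suborders are obtained by restricting the carrier.\<close>

definition po_on :: "'a set \<Rightarrow> ('a \<Rightarrow> 'a \<Rightarrow> bool) \<Rightarrow> bool" where
  "po_on D le \<longleftrightarrow>
     (\<forall>x\<in>D. le x x) \<and>
     (\<forall>x\<in>D. \<forall>y\<in>D. le x y \<and> le y x \<longrightarrow> x = y) \<and>
     (\<forall>x\<in>D. \<forall>y\<in>D. \<forall>z\<in>D. le x y \<and> le y z \<longrightarrow> le x z)"

definition lt :: "('a \<Rightarrow> 'a \<Rightarrow> bool) \<Rightarrow> 'a \<Rightarrow> 'a \<Rightarrow> bool" where
  "lt le x y \<longleftrightarrow> le x y \<and> x \<noteq> y"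

definition inc :: "('a \<Rightarrow> 'a \<Rightarrow> bool) \<Rightarrow> 'a \<Rightarrow> 'a \<Rightarrow> bool" where
  "inc le x y \<longleftrightarrow> x \<noteq> y \<and> \<not> le x y \<and> \<not> le y x"

text \<open>X is the domain of an induced suborder isomorphic to O_obs1
  (only comparabilities a<b, c<d).\<close>
definition is_obs1 :: "('a \<Rightarrow> 'a \<Rightarrow> bool) \<Rightarrow> 'a set \<Rightarrow> bool" where
  "is_obs1 le X \<longleftrightarrow> (\<exists>a b c d. X = {a, b, c, d} \<and> distinct [a, b, c, d] \<and>
      lt le a b \<and> lt le c d \<and>
      inc le a c \<and> inc le a d \<and> inc le b c \<and> inc le b d)"

text \<open>X is the domain of an induced suborder isomorphic to O_obs2
  (only comparabilities a<b, c<d, c<b).\<close>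
definition is_obs2 :: "('a \<Rightarrow> 'a \<Rightarrow> bool) \<Rightarrow> 'a set \<Rightarrow> bool" where
  "is_obs2 le X \<longleftrightarrow> (\<exists>a b c d. X = {a, b, c, d} \<and> distinct [a, b, c, d] \<and>
      lt le a b \<and> lt le c d \<and> lt le c b \<and>
      inc le a c \<and> inc le a d \<and> inc le d b)"

definition itov :: "'a set \<Rightarrow> ('a \<Rightarrow> 'a \<Rightarrow> bool) \<Rightarrow> bool" where
  "itov D le \<longleftrightarrow> \<not> (\<exists>X\<subseteq>D. is_obs1 le X \<or> is_obs2 le X)"

definition trunk :: "'a set \<Rightarrow> ('a \<Rightarrow> 'a \<Rightarrow> bool) \<Rightarrow> 'a set \<Rightarrow> bool" where
  "trunk D le T \<longleftrightarrow> T \<subseteq> D \<and>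
     (\<forall>x\<in>T. \<forall>y\<in>T. \<forall>z\<in>T. distinct [x, y, z] \<and> inc le x y \<and> inc le y z \<longrightarrow> inc le x z)"

definition same_level :: "('a \<Rightarrow> 'a \<Rightarrow> bool) \<Rightarrow> 'a \<Rightarrow> 'a \<Rightarrow> bool" where
  "same_level le y z \<longleftrightarrow> y = z \<or> inc le y z"

definition chain_in :: "'a set \<Rightarrow> ('a \<Rightarrow> 'a \<Rightarrow> bool) \<Rightarrow> 'a set \<Rightarrow> bool" where
  "chain_in D le C \<longleftrightarrow> C \<subseteq> D \<and> (\<forall>x\<in>C. \<forall>y\<in>C. le x y \<or> le y x)"

definition max_chain :: "'a set \<Rightarrow> ('a \<Rightarrow> 'a \<Rightarrow> bool) \<Rightarrow> 'a set \<Rightarrow> bool" where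
  "max_chain D le C \<longleftrightarrow> chain_in D le C \<and>
     (\<forall>C'. chain_in D le C' \<longrightarrow> card C' \<le> card C)"

definition full_trunk :: "'a set \<Rightarrow> ('a \<Rightarrow> 'a \<Rightarrow> bool) \<Rightarrow> 'a set \<Rightarrow> bool" where
  "full_trunk D le T \<longleftrightarrow> trunk D le T \<and> (\<exists>C. max_chain D le C \<and> C \<subseteq> T)"

definition maximal_full_trunk :: "'a set \<Rightarrow> ('a \<Rightarrow> 'a \<Rightarrow> bool) \<Rightarrow> 'a set \<Rightarrow> bool" where
  "maximal_full_trunk D le T \<longleftrightarrow> full_trunk D le T \<and>
     (\<forall>T'. full_trunk D le T' \<and> T \<subseteq> T' \<longrightarrow> T' = T)"

definition rel_max_full_trunk :: "'a set \<Rightarrow> ('a \<Rightarrow> 'a \<Rightarrow> bool) \<Rightarrow> 'a set \<Rightarrow> bool" where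
  "rel_max_full_trunk D le R \<longleftrightarrow> maximal_full_trunk D le R \<and>
     (\<forall>T. maximal_full_trunk D le T \<longrightarrow> T = R)"

definition regular_to :: "('a \<Rightarrow> 'a \<Rightarrow> bool) \<Rightarrow> 'a set \<Rightarrow> 'a \<Rightarrow> bool" where
  "regular_to le T x \<longleftrightarrow> (\<forall>y\<in>T. \<forall>z\<in>T. same_level le y z \<longrightarrow>
      (lt le x y \<longleftrightarrow> lt le x z) \<and>
      (lt le y x \<longleftrightarrow> lt le z x) \<and>
      ((inc le x y \<or> x = y) \<longleftrightarrow> (inc le x z \<or> x = z)))"

end

theory Submission
  imports Defs
begin

text \<open>Let M be the union of all maximum chains. For u in M, a longest chain below u and a
  longest chain above u together have one element more than a maximum chain. If two
  incomparable elements u, v of M had different heights, there would be an element b < v not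
  below u and an element a > u not above v, and {u, a, b, v} would induce O_obs1 or O_obs2.
  Hence incomparable elements of M have equal height, so incomparability is transitive on M;
  exchanging elements of maximum chains shows that M contains every full trunk. An element w
  outside M that is not regular to M spans an obstruction with a maximum chain through the
  offending element z of M, unless it can replace z in that chain.
  Conversely, an obstruction contains a < b both incomparable to a third element, so it does
  not lie in a trunk; and if exactly one of its vertices is outside R, that vertex is not
  regular to R.\<close>

section \<open>Orders and their duals\<close>

lemma po_on_refl: "po_on D le \<Longrightarrow> x \<in> D \<Longrightarrow> le x x"
  unfolding po_on_def by blast

lemma po_on_antisym: "po_on D le \<Longrightarrow> x \<in> D \<Longrightarrow> y \<in> D \<Longrightarrow> le x y \<Longrightarrow> le y x \<Longrightarrow> x = y"
  unfolding po_on_def by blast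

lemma po_on_trans:
  "po_on D le \<Longrightarrow> x \<in> D \<Longrightarrow> y \<in> D \<Longrightarrow> z \<in> D \<Longrightarrow> le x y \<Longrightarrow> le y z \<Longrightarrow> le x z"
  unfolding po_on_def by blast

lemma po_on_conversep: "po_on D le \<Longrightarrow> po_on D le\<inverse>\<inverse>"
  unfolding po_on_def conversep_iff by blast

lemma inc_commute: "inc le x y \<longleftrightarrow> inc le y x"
  unfolding inc_def by auto

lemma lt_conversep [simp]: "lt le\<inverse>\<inverse> x y \<longleftrightarrow> lt le y x"
  unfolding lt_def by auto

lemma inc_conversep [simp]: "inc le\<inverse>\<inverse> x y \<longleftrightarrow> inc le x y"
  unfolding inc_def by auto

lemma is_obs1I:
  assumes "lt le a b" "lt le c d" "inc le a c" "inc le a d" "inc le b c" "inc le b d"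
  shows "is_obs1 le {a, b, c, d}"
proof -
  have "distinct [a, b, c, d]" using assms unfolding lt_def inc_def by auto
  then show ?thesis unfolding is_obs1_def using assms by blast
qed

lemma is_obs2I:
  assumes "lt le a b" "lt le c d" "lt le c b" "inc le a c" "inc le a d" "inc le d b"
  shows "is_obs2 le {a, b, c, d}"
proof -
  have "distinct [a, b, c, d]" using assms unfolding lt_def inc_def by auto
  then show ?thesis unfolding is_obs2_def using assms by blast
qed

lemma is_obs1_conversep: "is_obs1 le\<inverse>\<inverse> X \<Longrightarrow> is_obs1 le X"
proof -
  assume "is_obs1 le\<inverse>\<inverse> X"
  then obtain a b c d where X: "X = {a, b, c, d}" and
    "lt le b a" "lt le d c" "inc le a c" "inc le a d" "inc le b c" "inc le b d"
    unfolding is_obs1_def by auto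
  then have "is_obs1 le {b, a, d, c}" by (intro is_obs1I) (simp_all add: inc_commute)
  moreover have "{b, a, d, c} = X" unfolding X by blast
  ultimately show ?thesis by simp
qed

lemma is_obs2_conversep: "is_obs2 le\<inverse>\<inverse> X \<Longrightarrow> is_obs2 le X"
proof -
  assume "is_obs2 le\<inverse>\<inverse> X"
  then obtain a b c d where X: "X = {a, b, c, d}" and
    "lt le b a" "lt le d c" "lt le b c" "inc le a c" "inc le a d" "inc le d b"
    unfolding is_obs2_def by auto
  then have "is_obs2 le {d, c, b, a}" by (intro is_obs2I) (simp_all add: inc_commute)
  moreover have "{d, c, b, a} = X" unfolding X by blast
  ultimately show ?thesis by simp
qed

lemma itov_conversep: "itov D le \<Longrightarrow> itov D le\<inverse>\<inverse>"
  unfolding itov_def by (metis is_obs1_conversep is_obs2_conversep)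

lemma itov_subset: "itov D le \<Longrightarrow> D' \<subseteq> D \<Longrightarrow> itov D' le"
  unfolding itov_def by blast

lemma itov_not_obs:
  assumes "itov D le" "a \<in> D" "b \<in> D" "c \<in> D" "d \<in> D"
  shows "\<not> is_obs1 le {a, b, c, d}" "\<not> is_obs2 le {a, b, c, d}"
  using assms unfolding itov_def by auto

section \<open>Maximum chains\<close>

lemma chain_in_conversep [simp]: "chain_in D le\<inverse>\<inverse> = chain_in D le"
  unfolding chain_in_def by (rule ext) (simp add: disj_commute)

lemma max_chain_conversep [simp]: "max_chain D le\<inverse>\<inverse> = max_chain D le"
  unfolding max_chain_def by simp

lemma chain_in_subset: "chain_in D le C \<Longrightarrow> C \<subseteq> D"
  unfolding chain_in_def by blast

lemma chain_in_finite: "finite D \<Longrightarrow> chain_in D le C \<Longrightarrow> finite C"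
  by (rule finite_subset[OF chain_in_subset])

lemma chain_in_anti_mono: "chain_in D le A \<Longrightarrow> B \<subseteq> A \<Longrightarrow> chain_in D le B"
  unfolding chain_in_def by blast

lemma chain_in_insert:
  assumes "po_on D le" "chain_in D le A" "v \<in> D" "\<forall>a\<in>A. le a v \<or> le v a"
  shows "chain_in D le (insert v A)"
  using assms po_on_refl[OF assms(1,3)] unfolding chain_in_def by blast

lemma max_chain_exists: "finite D \<Longrightarrow> \<exists>C. max_chain D le C"
  unfolding max_chain_def
proof (rule ex_has_greatest_nat[where k = "{}" and b = "card D + 1"])
  show "chain_in D le {}" unfolding chain_in_def by simp
  show "\<forall>C. chain_in D le C \<longrightarrow> card C < card D + 1" if "finite D"
    using that by (auto dest!: chain_in_subset intro: card_mono le_imp_less_Suc)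
qed

lemma max_chain_chain_in: "max_chain D le C \<Longrightarrow> chain_in D le C"
  unfolding max_chain_def by (rule conjunct1)

lemma max_chain_card_le: "max_chain D le C \<Longrightarrow> chain_in D le C' \<Longrightarrow> card C' \<le> card C"
  unfolding max_chain_def by blast

lemma max_chain_card_eq: "max_chain D le C \<Longrightarrow> max_chain D le C' \<Longrightarrow> card C = card C'"
  unfolding max_chain_def by (meson le_antisym)

lemma max_chain_of_card_eq:
  "max_chain D le C \<Longrightarrow> chain_in D le C' \<Longrightarrow> card C' = card C \<Longrightarrow> max_chain D le C'"
  unfolding max_chain_def by simp

lemma max_chain_exchange:
  assumes "finite D" "po_on D le" and C: "max_chain D le C" "c \<in> C"
    and x: "x \<in> D" "x \<notin> C" and comp: "\<forall>y\<in>C - {c}. le y x \<or> le x y"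
  shows "max_chain D le (insert x (C - {c}))"
proof -
  have ch: "chain_in D le C" using max_chain_chain_in[OF C(1)] .
  have "chain_in D le (insert x (C - {c}))"
    by (rule chain_in_insert[OF assms(2) chain_in_anti_mono[OF ch] x(1) comp]) blast
  moreover have card: "card (insert x (C - {c})) = card C"
  proof -
    have "finite C" using chain_in_finite[OF assms(1) ch] .
    then have "card (insert x (C - {c})) = Suc (card (C - {c}))" using x(2) by simp
    also have "\<dots> = card C" using card_Suc_Diff1[OF \<open>finite C\<close> C(2)] .
    finally show ?thesis .
  qed
  ultimately show ?thesis using max_chain_of_card_eq[OF C(1)] by blast
qed

lemma max_chain_incomparable:
  assumes "finite D" "po_on D le" "max_chain D le C" "x \<in> D" "x \<notin> C"
  shows "\<exists>c\<in>C. inc le c x"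
proof (rule ccontr)
  assume "\<not> (\<exists>c\<in>C. inc le c x)"
  then have "\<forall>c\<in>C. le c x \<or> le x c" using assms(5) unfolding inc_def by fastforce
  have ch: "chain_in D le C" using max_chain_chain_in[OF assms(3)] .
  have "chain_in D le (insert x C)" by (rule chain_in_insert[OF assms(2) ch assms(4)]) fact
  then have "card (insert x C) \<le> card C" by (rule max_chain_card_le[OF assms(3)])
  then show False using assms(5) chain_in_finite[OF assms(1) ch] by simp
qed

definition max_chain_union :: "'a set \<Rightarrow> ('a \<Rightarrow> 'a \<Rightarrow> bool) \<Rightarrow> 'a set" where
  "max_chain_union D le = \<Union>{C. max_chain D le C}"

lemma max_chain_union_conversep [simp]: "max_chain_union D le\<inverse>\<inverse> = max_chain_union D le"
  unfolding max_chain_union_def by simp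

lemma max_chain_union_subset: "max_chain_union D le \<subseteq> D"
  unfolding max_chain_union_def max_chain_def by (auto dest: chain_in_subset)

lemma max_chain_subset_union: "max_chain D le C \<Longrightarrow> C \<subseteq> max_chain_union D le"
  unfolding max_chain_union_def by blast

lemma max_chain_unionE:
  assumes "u \<in> max_chain_union D le"
  obtains C where "max_chain D le C" "u \<in> C"
  using assms unfolding max_chain_union_def by blast

section \<open>Heights\<close>

definition height_below :: "'a set \<Rightarrow> ('a \<Rightarrow> 'a \<Rightarrow> bool) \<Rightarrow> 'a \<Rightarrow> nat" where
  "height_below D le u = Max (card ` {A. chain_in D le A \<and> (\<forall>a\<in>A. le a u)})"

lemma finite_chains_below: "finite D \<Longrightarrow> finite {A. chain_in D le A \<and> (\<forall>a\<in>A. le a u)}"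
  by (rule finite_subset[of _ "Pow D"]) (auto dest: chain_in_subset)

lemma card_le_height_below:
  assumes "finite D" "chain_in D le A" "\<forall>a\<in>A. le a u"
  shows "card A \<le> height_below D le u"
  unfolding height_below_def using finite_chains_below[OF assms(1)] assms(2,3)
  by (intro Max_ge) auto

lemma height_below_attained:
  assumes "finite D"
  obtains A where "chain_in D le A" "\<forall>a\<in>A. le a u" "card A = height_below D le u"
proof -
  let ?S = "{A. chain_in D le A \<and> (\<forall>a\<in>A. le a u)}"
  have "finite ?S" by (rule finite_chains_below[OF assms])
  moreover have "{} \<in> ?S" unfolding chain_in_def by simp
  ultimately have "height_below D le u \<in> card ` ?S"
    unfolding height_below_def by (intro Max_in) auto
  then show ?thesis using that by auto
qed

lemma height_below_add_above_le:
  assumes fin: "finite D" and po: "po_on D le" and C: "max_chain D le C" and u: "u \<in> D"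
  shows "height_below D le u + height_below D le\<inverse>\<inverse> u \<le> card C + 1"
proof -
  obtain A where A: "chain_in D le A" "\<forall>a\<in>A. le a u" "card A = height_below D le u"
    using height_below_attained[OF fin] by blast
  obtain B where B: "chain_in D le B" "\<forall>b\<in>B. le u b" "card B = height_below D le\<inverse>\<inverse> u"
    using height_below_attained[OF fin, of "le\<inverse>\<inverse>" u] by auto
  have AD: "A \<subseteq> D" and BD: "B \<subseteq> D" using A(1) B(1) by (auto dest: chain_in_subset)
  have "\<forall>a\<in>A. \<forall>b\<in>B. le a b"
    using A(2) B(2) AD BD po_on_trans[OF po _ u] by blast
  then have "chain_in D le (A \<union> B)" using A(1) B(1) unfolding chain_in_def by blast
  then have "card (A \<union> B) \<le> card C" by (rule max_chain_card_le[OF C])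
  moreover have "A \<inter> B \<subseteq> {u}"
    using A(2) B(2) AD po_on_antisym[OF po _ u] by blast
  then have "card (A \<inter> B) \<le> 1" using card_mono[of "{u}"] by fastforce
  moreover have "card A + card B = card (A \<union> B) + card (A \<inter> B)"
    using card_Un_Int chain_in_finite[OF fin A(1)] chain_in_finite[OF fin B(1)] by blast
  ultimately show ?thesis using A(3) B(3) by linarith
qed

lemma height_below_add_above_ge:
  assumes fin: "finite D" and po: "po_on D le" and C: "max_chain D le C" and u: "u \<in> C"
  shows "card C + 1 \<le> height_below D le u + height_below D le\<inverse>\<inverse> u"
proof -
  have ch: "chain_in D le C" by (rule max_chain_chain_in[OF C])
  have CD: "C \<subseteq> D" by (rule chain_in_subset[OF ch])
  define A where "A = {c\<in>C. le c u}"
  define B where "B = {c\<in>C. le u c}"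
  have "chain_in D le A" "chain_in D le\<inverse>\<inverse> B"
    using chain_in_anti_mono[OF ch] unfolding A_def B_def by auto
  then have "card A \<le> height_below D le u" "card B \<le> height_below D le\<inverse>\<inverse> u"
    by (auto intro!: card_le_height_below[OF fin] simp: A_def B_def)
  moreover have "A \<union> B = C" using ch u unfolding A_def B_def chain_in_def by blast
  moreover have "A \<inter> B = {u}"
  proof
    show "A \<inter> B \<subseteq> {u}" using po_on_antisym[OF po] CD u unfolding A_def B_def by blast
    show "{u} \<subseteq> A \<inter> B" using po_on_refl[OF po] CD u unfolding A_def B_def by blast
  qed
  moreover have "finite A" "finite B" using chain_in_finite[OF fin ch] unfolding A_def B_def by auto
  then have "card A + card B = card (A \<union> B) + card (A \<inter> B)" by (rule card_Un_Int)
  ultimately show ?thesis by simp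
qed

lemma height_below_add_above_eq:
  assumes "finite D" "po_on D le" "max_chain D le C" "u \<in> max_chain_union D le"
  shows "height_below D le u + height_below D le\<inverse>\<inverse> u = card C + 1"
proof -
  obtain C' where C': "max_chain D le C'" "u \<in> C'" by (rule max_chain_unionE[OF assms(4)])
  have "u \<in> D" by (rule subsetD[OF max_chain_union_subset assms(4)])
  then show ?thesis
    using height_below_add_above_le[OF assms(1-3)] height_below_add_above_ge[OF assms(1,2) C']
      max_chain_card_eq[OF assms(3) C'(1)] by fastforce
qed

lemma height_below_mono:
  assumes fin: "finite D" and po: "po_on D le" and v: "v \<in> D"
    and below: "\<forall>w\<in>D. lt le w u \<longrightarrow> lt le w v"
  shows "height_below D le u \<le> height_below D le v"
proof -
  obtain A where A: "chain_in D le A" "\<forall>a\<in>A. le a u" "card A = height_below D le u"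
    using height_below_attained[OF fin] by blast
  have AD: "A \<subseteq> D" by (rule chain_in_subset[OF A(1)])
  have lt: "\<forall>a\<in>A - {u}. lt le a v" using below A(2) AD unfolding lt_def by blast
  then have "chain_in D le (insert v (A - {u}))"
    using chain_in_insert[OF po chain_in_anti_mono[OF A(1)] v] unfolding lt_def by blast
  moreover have "\<forall>a\<in>insert v (A - {u}). le a v" using lt po_on_refl[OF po v] unfolding lt_def by blast
  ultimately have "card (insert v (A - {u})) \<le> height_below D le v"
    by (rule card_le_height_below[OF fin])
  moreover have "v \<notin> A - {u}" using lt unfolding lt_def by blast
  then have "card (insert v (A - {u})) = card (A - {u}) + 1"
    using chain_in_finite[OF fin A(1)] by simp
  moreover have "card A \<le> card (A - {u}) + 1"
    using chain_in_finite[OF fin A(1)] by (cases "u \<in> A") auto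
  ultimately show ?thesis using A(3) by linarith
qed

lemma height_below_strict_mono:
  assumes fin: "finite D" and po: "po_on D le" and u: "u \<in> D" and w: "w \<in> D"
    and wu: "lt le w u"
  shows "height_below D le w < height_below D le u"
proof -
  obtain A where A: "chain_in D le A" "\<forall>a\<in>A. le a w" "card A = height_below D le w"
    using height_below_attained[OF fin] by blast
  have AD: "A \<subseteq> D" by (rule chain_in_subset[OF A(1)])
  have below: "\<forall>a\<in>A. le a u" using A(2) AD po_on_trans[OF po _ w u] wu unfolding lt_def by blast
  have "u \<notin> A" using A(2) wu po_on_antisym[OF po w u] unfolding lt_def by blast
  have "chain_in D le (insert u A)" using chain_in_insert[OF po A(1) u] below by blast
  moreover have "\<forall>a\<in>insert u A. le a u" using below po_on_refl[OF po u] by blast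
  ultimately have "card (insert u A) \<le> height_below D le u" by (rule card_le_height_below[OF fin])
  then show ?thesis using \<open>u \<notin> A\<close> chain_in_finite[OF fin A(1)] A(3) by simp
qed

section \<open>The union of all maximum chains\<close>

lemma itov_incomparable_up_transfer:
  assumes po: "po_on D le" and it: "itov D le"
    and D: "a \<in> D" "b \<in> D" "u \<in> D" "v \<in> D"
    and uv: "inc le u v" and bv: "lt le b v" and bu: "\<not> lt le b u" and ua: "lt le u a"
  shows "lt le v a"
proof (rule ccontr)
  assume va: "\<not> lt le v a"
  have ub: "inc le u b"
    using uv bv bu po_on_trans[OF po D(3,2,4)] unfolding inc_def lt_def by blast
  have av: "inc le a v"
    using uv ua va po_on_trans[OF po D(3,1,4)] unfolding inc_def lt_def by blast
  have "\<not> le a b" using ua bv uv po_on_trans[OF po D(3,1,2)] po_on_trans[OF po D(3,2,4)]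
    unfolding inc_def lt_def by blast
  moreover have "a \<noteq> b" using ua ub unfolding inc_def lt_def by blast
  ultimately consider "lt le b a" | "inc le a b" unfolding inc_def lt_def by blast
  then show False
  proof cases
    case 1
    then have "is_obs2 le {u, a, b, v}" using is_obs2I[OF ua bv _ ub uv] av by (simp add: inc_commute)
    then show False using itov_not_obs[OF it D(3,1,2,4)] by blast
  next
    case 2
    then have "is_obs1 le {u, a, b, v}" using is_obs1I[OF ua bv ub uv] av by blast
    then show False using itov_not_obs[OF it D(3,1,2,4)] by blast
  qed
qed

lemma itov_height_below_eq:
  assumes fin: "finite D" and po: "po_on D le" and it: "itov D le"
    and u: "u \<in> max_chain_union D le" and v: "v \<in> max_chain_union D le" and uv: "inc le u v"
  shows "height_below D le u = height_below D le v"
proof -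
  obtain C where C: "max_chain D le C" using max_chain_exists[OF fin, of le] by blast
  have False if x: "x \<in> max_chain_union D le" and y: "y \<in> max_chain_union D le"
    and xy: "inc le x y" and less: "height_below D le x < height_below D le y" for x y
  proof -
    have xD: "x \<in> D" and yD: "y \<in> D" using x y max_chain_union_subset[of D le] by blast+
    have "height_below D le\<inverse>\<inverse> y < height_below D le\<inverse>\<inverse> x"
      using height_below_add_above_eq[OF fin po C x] height_below_add_above_eq[OF fin po C y] less
      by linarith
    then obtain a where a: "a \<in> D" "lt le x a" "\<not> lt le y a"
      using height_below_mono[OF fin po_on_conversep[OF po] yD, of x] by auto
    obtain b where b: "b \<in> D" "lt le b y" "\<not> lt le b x"
      using height_below_mono[OF fin po xD, of y] less by auto
    show False using itov_incomparable_up_transfer[OF po it a(1) b(1) xD yD xy b(2,3) a(2)] a(3)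
      by blast
  qed
  then show ?thesis using u v uv inc_commute[of le u v] by (meson linorder_neqE_nat)
qed

lemma trunk_incD:
  assumes "trunk D le T" "x \<in> T" "y \<in> T" "z \<in> T" "distinct [x, y, z]" "inc le x y" "inc le y z"
  shows "inc le x z"
  using assms unfolding trunk_def by blast

lemma trunk_max_chain_union:
  assumes fin: "finite D" and po: "po_on D le" and it: "itov D le"
  shows "trunk D le (max_chain_union D le)"
  unfolding trunk_def
proof (intro conjI ballI impI)
  fix x y z assume x: "x \<in> max_chain_union D le" and y: "y \<in> max_chain_union D le"
    and z: "z \<in> max_chain_union D le" and xyz: "distinct [x, y, z] \<and> inc le x y \<and> inc le y z"
  then have "height_below D le x = height_below D le z"
    using itov_height_below_eq[OF fin po it] by metis
  moreover have "x \<in> D" "z \<in> D" using x z max_chain_union_subset[of D le] by blast+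
  ultimately have "\<not> lt le x z" "\<not> lt le z x"
    using height_below_strict_mono[OF fin po] by (metis less_irrefl)+
  then show "inc le x z" using xyz unfolding inc_def lt_def by auto
qed (rule max_chain_union_subset)

lemma full_trunk_subset_max_chain_union:
  assumes fin: "finite D" and po: "po_on D le" and T: "trunk D le T"
    and C: "max_chain D le C" "C \<subseteq> T"
  shows "T \<subseteq> max_chain_union D le"
proof
  fix x assume x: "x \<in> T"
  show "x \<in> max_chain_union D le"
  proof (cases "x \<in> C")
    case True
    then show ?thesis using max_chain_subset_union[OF C(1)] by blast
  next
    case False
    have xD: "x \<in> D" using T x unfolding trunk_def by blast
    obtain c where c: "c \<in> C" "inc le c x" using max_chain_incomparable[OF fin po C(1) xD False] ..
    have "\<forall>y\<in>C - {c}. le y x \<or> le x y"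
    proof (rule ballI, rule ccontr)
      fix y assume y: "y \<in> C - {c}" and "\<not> (le y x \<or> le x y)"
      then have "inc le x y" using False unfolding inc_def by blast
      then have "inc le c y"
        using trunk_incD[OF T, of c x y] c y C(2) x False by auto
      then show False using max_chain_chain_in[OF C(1)] c(1) y unfolding chain_in_def inc_def by blast
    qed
    then have "max_chain D le (insert x (C - {c}))"
      by (rule max_chain_exchange[OF fin po C(1) c(1) xD False])
    then show ?thesis using max_chain_subset_union by blast
  qed
qed

lemma rel_max_full_trunkI:
  assumes "full_trunk D le R" "\<And>T. full_trunk D le T \<Longrightarrow> T \<subseteq> R"
  shows "rel_max_full_trunk D le R"
  using assms unfolding rel_max_full_trunk_def maximal_full_trunk_def by blast

lemma rel_max_full_trunk_trunk: "rel_max_full_trunk D le R \<Longrightarrow> trunk D le R"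
  unfolding rel_max_full_trunk_def maximal_full_trunk_def full_trunk_def by blast

lemma rel_max_full_trunk_max_chain_union:
  assumes fin: "finite D" and po: "po_on D le" and it: "itov D le"
  shows "rel_max_full_trunk D le (max_chain_union D le)"
proof (rule rel_max_full_trunkI)
  obtain C where C: "max_chain D le C" using max_chain_exists[OF fin, of le] by blast
  then show "full_trunk D le (max_chain_union D le)"
    unfolding full_trunk_def using trunk_max_chain_union[OF fin po it] max_chain_subset_union
    by blast
next
  fix T assume "full_trunk D le T"
  then show "T \<subseteq> max_chain_union D le"
    unfolding full_trunk_def using full_trunk_subset_max_chain_union[OF fin po] by blast
qed

section \<open>Regularity\<close>

lemma itov_lt_of_lt_incomparable:
  assumes po: "po_on D le" and it: "itov D le" and D: "w \<in> D" "y \<in> D" "z \<in> D" "p \<in> D"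
    and wy: "lt le w y" and yz: "inc le y z" and wz: "inc le w z" and pz: "lt le p z"
    and pw: "p \<noteq> w"
  shows "lt le p w"
proof (rule ccontr)
  assume "\<not> lt le p w"
  then have wp: "inc le w p"
    using pw pz wz po_on_trans[OF po D(1,4,3)] unfolding inc_def lt_def by blast
  have "\<not> le y p" "p \<noteq> y" using pz yz po_on_trans[OF po D(2,4,3)] unfolding inc_def lt_def by auto
  then consider "lt le p y" | "inc le y p" unfolding inc_def lt_def by blast
  then show False
  proof cases
    case 1
    then have "is_obs2 le {w, y, p, z}" using is_obs2I[OF wy pz _ wp wz] yz by (simp add: inc_commute)
    then show False using itov_not_obs[OF it D(1,2,4,3)] by blast
  next
    case 2
    then have "is_obs1 le {w, y, p, z}" using is_obs1I[OF wy pz wp wz] yz by blast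
    then show False using itov_not_obs[OF it D(1,2,4,3)] by blast
  qed
qed

lemma itov_gt_of_lt_incomparable:
  assumes po: "po_on D le" and it: "itov D le" and D: "w \<in> D" "y \<in> D" "z \<in> D" "q \<in> D"
    and wy: "lt le w y" and yz: "inc le y z" and wz: "inc le w z" and zq: "lt le z q"
    and qw: "q \<noteq> w"
  shows "lt le w q"
proof (rule ccontr)
  assume "\<not> lt le w q"
  then have wq: "inc le w q"
    using qw zq wz po_on_trans[OF po D(3,4,1)] unfolding inc_def lt_def by blast
  have "inc le y q"
    using wy zq yz wq po_on_trans[OF po D(1,2,4)] po_on_trans[OF po D(3,4,2)]
    unfolding inc_def lt_def by blast
  then have "is_obs1 le {w, y, z, q}" using is_obs1I[OF wy zq wz wq yz] by blast
  then show False using itov_not_obs[OF it D] by blast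
qed

lemma itov_lt_transfer:
  assumes fin: "finite D" and po: "po_on D le" and it: "itov D le"
    and w: "w \<in> D" "w \<notin> max_chain_union D le"
    and y: "y \<in> max_chain_union D le" and z: "z \<in> max_chain_union D le"
    and yz: "inc le y z" and wy: "lt le w y"
  shows "lt le w z"
proof (rule ccontr)
  assume "\<not> lt le w z"
  \<comment> \<open>then w could replace z in a maximum chain through z\<close>
  have yD: "y \<in> D" and zD: "z \<in> D" using y z max_chain_union_subset[of D le] by blast+
  have wz: "inc le w z"
    using \<open>\<not> lt le w z\<close> w(2) z wy yz po_on_trans[OF po zD w(1) yD]
    unfolding inc_def lt_def by blast
  obtain C where C: "max_chain D le C" "z \<in> C" by (rule max_chain_unionE[OF z])
  have CD: "C \<subseteq> D" and CM: "C \<subseteq> max_chain_union D le"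
    using chain_in_subset[OF max_chain_chain_in[OF C(1)]] max_chain_subset_union[OF C(1)] .
  have "\<forall>c\<in>C - {z}. le c w \<or> le w c"
  proof
    fix c assume c: "c \<in> C - {z}"
    then have "lt le c z \<or> lt le z c"
      using max_chain_chain_in[OF C(1)] C(2) unfolding chain_in_def lt_def by blast
    moreover have "c \<noteq> w" using c CM w(2) by blast
    ultimately have "lt le c w \<or> lt le w c"
      using itov_lt_of_lt_incomparable[OF po it w(1) yD zD _ wy yz wz]
        itov_gt_of_lt_incomparable[OF po it w(1) yD zD _ wy yz wz] c CD by blast
    then show "le c w \<or> le w c" unfolding lt_def by blast
  qed
  then have "max_chain D le (insert w (C - {z}))"
    using max_chain_exchange[OF fin po C w(1)] w(2) CM by blast
  then show False using w(2) max_chain_subset_union by blast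
qed

lemma itov_gt_transfer:
  assumes fin: "finite D" and po: "po_on D le" and it: "itov D le"
    and w: "w \<in> D" "w \<notin> max_chain_union D le"
    and y: "y \<in> max_chain_union D le" and z: "z \<in> max_chain_union D le"
    and yz: "inc le y z" and yw: "lt le y w"
  shows "lt le z w"
  using itov_lt_transfer[OF fin po_on_conversep[OF po] itov_conversep[OF it], of w y z] assms
  by simp

lemma regular_to_max_chain_union:
  assumes fin: "finite D" and po: "po_on D le" and it: "itov D le"
    and w: "w \<in> D" "w \<notin> max_chain_union D le"
  shows "regular_to le (max_chain_union D le) w"
  unfolding regular_to_def
proof (intro ballI impI)
  fix y z assume y: "y \<in> max_chain_union D le" and z: "z \<in> max_chain_union D le"
    and "same_level le y z"
  then consider "y = z" | "inc le y z" unfolding same_level_def by blast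
  then show "(lt le w y \<longleftrightarrow> lt le w z) \<and> (lt le y w \<longleftrightarrow> lt le z w) \<and>
        ((inc le w y \<or> w = y) \<longleftrightarrow> (inc le w z \<or> w = z))"
  proof cases
    case 2
    then have "inc le z y" by (simp add: inc_commute)
    have "w \<noteq> y" "w \<noteq> z" using w(2) y z by blast+
    moreover have "lt le w y \<longleftrightarrow> lt le w z" "lt le y w \<longleftrightarrow> lt le z w"
      using itov_lt_transfer[OF fin po it w] itov_gt_transfer[OF fin po it w]
        y z \<open>inc le y z\<close> \<open>inc le z y\<close> by blast+
    ultimately show ?thesis unfolding inc_def lt_def by blast
  qed simp
qed

section \<open>Obstructions relative to a trunk\<close>

lemma trunk_not_obs:
  assumes "trunk D le T" "X \<subseteq> T"
  shows "\<not> (is_obs1 le X \<or> is_obs2 le X)"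
proof
  assume "is_obs1 le X \<or> is_obs2 le X"
  then obtain a b c where "a \<in> X" "b \<in> X" "c \<in> X" "distinct [a, c, b]"
    "inc le a c" "inc le c b" "lt le a b"
  proof (elim disjE)
    assume "is_obs1 le X"
    then show thesis using that unfolding is_obs1_def by (force simp: inc_commute)
  next
    assume "is_obs2 le X"
    then show thesis using that unfolding is_obs2_def by (force simp: inc_commute)
  qed
  then have "inc le a b" using trunk_incD[OF assms(1)] assms(2) by blast
  then show False using \<open>lt le a b\<close> unfolding inc_def lt_def by blast
qed

lemma obs_vertex_separates:
  assumes "is_obs1 le X \<or> is_obs2 le X" "x \<in> X"
  shows "\<exists>y\<in>X - {x}. \<exists>z\<in>X - {x}. inc le y z \<and>
    \<not> ((lt le x y \<longleftrightarrow> lt le x z) \<and> (lt le y x \<longleftrightarrow> lt le z x))"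
proof -
  have sep: "\<exists>y\<in>X - {x}. \<exists>z\<in>X - {x}. inc le y z \<and>
    \<not> ((lt le x y \<longleftrightarrow> lt le x z) \<and> (lt le y x \<longleftrightarrow> lt le z x))"
    if "y \<in> X" "z \<in> X" "y \<noteq> x" "z \<noteq> x" "inc le y z"
      "\<not> ((lt le x y \<longleftrightarrow> lt le x z) \<and> (lt le y x \<longleftrightarrow> lt le z x))" for y z
    using that by blast
  show ?thesis using assms(1)
  proof (elim disjE)
    assume "is_obs1 le X"
    then obtain a b c d where X: "X = {a, b, c, d}" "distinct [a, b, c, d]"
      "lt le a b" "lt le c d" "inc le a c" "inc le a d" "inc le b c" "inc le b d"
      unfolding is_obs1_def by blast
    then consider "x = a" | "x = b" | "x = c" | "x = d" using assms(2) by blast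
    then show ?thesis
    proof cases
      case 1 show ?thesis by (rule sep[of b c]) (use 1 X in \<open>auto simp: lt_def inc_def\<close>)
    next
      case 2 show ?thesis by (rule sep[of a c]) (use 2 X in \<open>auto simp: lt_def inc_def\<close>)
    next
      case 3 show ?thesis by (rule sep[of a d]) (use 3 X in \<open>auto simp: lt_def inc_def\<close>)
    next
      case 4 show ?thesis by (rule sep[of a c]) (use 4 X in \<open>auto simp: lt_def inc_def\<close>)
    qed
  next
    assume "is_obs2 le X"
    then obtain a b c d where X: "X = {a, b, c, d}" "distinct [a, b, c, d]"
      "lt le a b" "lt le c d" "lt le c b" "inc le a c" "inc le a d" "inc le d b"
      unfolding is_obs2_def by blast
    then consider "x = a" | "x = b" | "x = c" | "x = d" using assms(2) by blast
    then show ?thesis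
    proof cases
      case 1 show ?thesis by (rule sep[of d b]) (use 1 X in \<open>auto simp: lt_def inc_def\<close>)
    next
      case 2 show ?thesis by (rule sep[of a d]) (use 2 X in \<open>auto simp: lt_def inc_def\<close>)
    next
      case 3 show ?thesis by (rule sep[of a d]) (use 3 X in \<open>auto simp: lt_def inc_def\<close>)
    next
      case 4 show ?thesis by (rule sep[of a c]) (use 4 X in \<open>auto simp: lt_def inc_def\<close>)
    qed
  qed
qed

lemma regular_toD:
  assumes "regular_to le R x" "y \<in> R" "z \<in> R" "inc le y z"
  shows "(lt le x y \<longleftrightarrow> lt le x z) \<and> (lt le y x \<longleftrightarrow> lt le z x)"
  using assms unfolding regular_to_def same_level_def by blast

lemma regular_to_not_obs:
  assumes reg: "regular_to le R x" and X: "X - R = {x}"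
  shows "\<not> (is_obs1 le X \<or> is_obs2 le X)"
proof
  assume obs: "is_obs1 le X \<or> is_obs2 le X"
  have "x \<in> X" using X by blast
  then obtain y z where "y \<in> X - {x}" "z \<in> X - {x}" "inc le y z"
    "\<not> ((lt le x y \<longleftrightarrow> lt le x z) \<and> (lt le y x \<longleftrightarrow> lt le z x))"
    using obs_vertex_separates[OF obs] by blast
  moreover have "X - {x} \<subseteq> R" using X by blast
  ultimately show False using regular_toD[OF reg] by blast
qed

lemma itov_of_trunk_decomposition:
  assumes R: "trunk D le R" and it: "itov (D - R) le"
    and reg: "\<forall>x\<in>D - R. regular_to le R x"
    and mixed: "\<not> (\<exists>X\<subseteq>D. (is_obs1 le X \<or> is_obs2 le X) \<and>
               X \<inter> R \<noteq> {} \<and> X - R \<noteq> {} \<and> card (X - R) \<ge> 2)"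
  shows "itov D le"
  unfolding itov_def
proof
  assume "\<exists>X\<subseteq>D. is_obs1 le X \<or> is_obs2 le X"
  then obtain X where XD: "X \<subseteq> D" and obs: "is_obs1 le X \<or> is_obs2 le X" by blast
  have "X \<inter> R \<noteq> {}" using it obs XD unfolding itov_def by blast
  moreover have "X - R \<noteq> {}"
  proof
    assume "X - R = {}"
    then show False using trunk_not_obs[OF R, of X] obs by blast
  qed
  moreover have "card (X - R) \<noteq> 1"
  proof
    assume "card (X - R) = 1"
    then obtain x where x: "X - R = {x}" by (rule card_1_singletonE)
    then have "regular_to le R x" using reg XD by blast
    then show False using regular_to_not_obs[OF _ x] obs by blast
  qed
  moreover have "card (X - R) \<noteq> 0"
    using \<open>X - R \<noteq> {}\<close> obs unfolding is_obs1_def is_obs2_def by auto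
  ultimately have "card (X - R) \<ge> 2" by linarith
  then show False using mixed XD obs \<open>X \<inter> R \<noteq> {}\<close> \<open>X - R \<noteq> {}\<close> by blast
qed

theorem theorem5:
  fixes D :: "'a set" and le :: "'a \<Rightarrow> 'a \<Rightarrow> bool"
  assumes "finite D" and "po_on D le"
  shows "itov D le \<longleftrightarrow>
    (\<exists>R. rel_max_full_trunk D le R \<and>
         itov (D - R) le \<and>
         (\<forall>x\<in>D - R. regular_to le R x) \<and>
         \<not> (\<exists>X\<subseteq>D. (is_obs1 le X \<or> is_obs2 le X) \<and>
               X \<inter> R \<noteq> {} \<and> X - R \<noteq> {} \<and> card (X - R) \<ge> 2))"
proof (rule iffI)
  assume it: "itov D le"
  let ?M = "max_chain_union D le"
  have "rel_max_full_trunk D le ?M" by (rule rel_max_full_trunk_max_chain_union[OF assms it])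
  moreover have "itov (D - ?M) le" using itov_subset[OF it] by blast
  moreover have "\<forall>x\<in>D - ?M. regular_to le ?M x" using regular_to_max_chain_union[OF assms it] by blast
  ultimately show "\<exists>R. rel_max_full_trunk D le R \<and>
         itov (D - R) le \<and>
         (\<forall>x\<in>D - R. regular_to le R x) \<and>
         \<not> (\<exists>X\<subseteq>D. (is_obs1 le X \<or> is_obs2 le X) \<and>
               X \<inter> R \<noteq> {} \<and> X - R \<noteq> {} \<and> card (X - R) \<ge> 2)"
    using it unfolding itov_def by blast
qed (elim exE conjE, rule itov_of_trunk_decomposition[OF rel_max_full_trunk_trunk])

end
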